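(* Let $W$ be the Witt algebra with basis $\{x_n\mid n\in\mathbb{Z}\}$ and bracket $[x_m,x_n]=(n-m)x_{m+n}$. For $\beta\in\mathbb{C}$ and $k\in\mathbb{Z}$ with $\beta-k\neq0$, the product $$x_mx_n=(n+k)x_{m+n}\ \text{ if } m+n+k\neq0,\qquad x_{-n-k}x_n=\frac{(n+k)(\beta-n-k)}{\beta-k}x_{-k},$$ defines a left-symmetric algebra $V^{\beta,k}$ on the underlying space of $W$ whose commutator $x_mx_n-x_nx_m$ is the bracket of $W$.
   Context: A left-symmetric algebra is a vector space with bilinear product satisfying $(xy)z-x(yz)=(yx)z-y(xz)$ for all $x,y,z$. *)

theory Defs
  imports Complex_Main "HOL-Library.Poly_Mapping"
begin

text \<open>The underlying space of the Witt algebra: finitely supported coefficient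
functions, i.e. the complex vector space with basis x_n (n in Z), where
x_n = Poly_Mapping.single n 1.\<close>

type_synonym wspace = "int \<Rightarrow>\<^sub>0 complex"

definition basis_x :: "int \<Rightarrow> wspace" where
  "basis_x n = Poly_Mapping.single n 1"

definition bilin_ext :: "(int \<Rightarrow> int \<Rightarrow> complex) \<Rightarrow> wspace \<Rightarrow> wspace \<Rightarrow> wspace" where
  "bilin_ext c a b =
     (\<Sum>m\<in>Poly_Mapping.keys a. \<Sum>n\<in>Poly_Mapping.keys b.
        Poly_Mapping.single (m + n) (Poly_Mapping.lookup a m * Poly_Mapping.lookup b n * c m n))"

definition witt_bracket :: "wspace \<Rightarrow> wspace \<Rightarrow> wspace" where
  "witt_bracket = bilin_ext (\<lambda>m n. of_int (n - m))"

definition V_coeff :: "complex \<Rightarrow> int \<Rightarrow> int \<Rightarrow> int \<Rightarrow> complex" where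
  "V_coeff \<beta> k m n =
     (if m + n + k \<noteq> 0 then of_int (n + k)
      else of_int (n + k) * (\<beta> - of_int (n + k)) / (\<beta> - of_int k))"

definition V_prod :: "complex \<Rightarrow> int \<Rightarrow> wspace \<Rightarrow> wspace \<Rightarrow> wspace" where
  "V_prod \<beta> k = bilin_ext (V_coeff \<beta> k)"

definition left_symmetric :: "('v::ab_group_add \<Rightarrow> 'v \<Rightarrow> 'v) \<Rightarrow> bool" where
  "left_symmetric p \<longleftrightarrow>
     (\<forall>x y z. p (p x y) z - p x (p y z) = p (p y x) z - p y (p x z))"

end

theory Submission
  imports Defs
begin

text \<open>Write \<open>\<lambda> = \<beta> - k\<close> and \<open>d(m,n) = [m + n + k = 0] m n / \<lambda>\<close>. The structure
constants are \<open>c(m,n) = (n + k) + d(m,n)\<close>: the product perturbs the left-symmetric product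
\<open>x\<^sub>m x\<^sub>n = (n + k) x\<^sub>m\<^sub>+\<^sub>n\<close> by a term symmetric in \<open>m, n\<close>, which gives the commutator
at once. By multilinearity, left symmetry reduces to basis vectors, i.e. to the symmetry in
\<open>m, n\<close> of the associator coefficient \<open>c(m,n) c(m+n,q) - c(n,q) c(m,n+q)\<close>. Products of two
correction terms vanish, since their index conditions force an index to be \<open>0\<close>, and \<open>d(n,q)\<close>
is killed by the factor \<open>n + q + k\<close>; what remains is
\<open>(q + k)(d(m,n) - q) + [m + n + q + k = 0] (m + n)(m n - q\<^sup>2) / \<lambda>\<close>, visibly symmetric.\<close>

lemma poly_mapping_additive_eq_0:
  fixes F :: "('a \<Rightarrow>\<^sub>0 'b::monoid_add) \<Rightarrow> 'c::monoid_add"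
  assumes additive: "\<And>x y. F (x + y) = F x + F y"
    and single: "\<And>i r. F (Poly_Mapping.single i r) = 0"
  shows "F x = 0"
proof (induction x rule: Poly_Mapping.update_induct)
  case const
  show ?case using single[of undefined 0] by simp
next
  case (update f i r)
  have "Poly_Mapping.update i r f = Poly_Mapping.single i r + f"
    using update(1)
    by (intro poly_mapping_eqI) (auto simp: lookup_update lookup_add lookup_single in_keys_iff when_def)
  then show ?case using additive single update(3) by simp
qed

lemma bilin_ext_eq_sum_superset:
  assumes "finite S" "finite T" "Poly_Mapping.keys a \<subseteq> S" "Poly_Mapping.keys b \<subseteq> T"
  shows "bilin_ext c a b = (\<Sum>m\<in>S. \<Sum>n\<in>T.
    Poly_Mapping.single (m + n) (Poly_Mapping.lookup a m * Poly_Mapping.lookup b n * c m n))"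
proof -
  have "bilin_ext c a b = (\<Sum>m\<in>Poly_Mapping.keys a. \<Sum>n\<in>T.
      Poly_Mapping.single (m + n) (Poly_Mapping.lookup a m * Poly_Mapping.lookup b n * c m n))"
    unfolding bilin_ext_def
    by (intro sum.cong refl sum.mono_neutral_left assms) (auto simp: in_keys_iff)
  also have "\<dots> = (\<Sum>m\<in>S. \<Sum>n\<in>T.
      Poly_Mapping.single (m + n) (Poly_Mapping.lookup a m * Poly_Mapping.lookup b n * c m n))"
    by (intro sum.mono_neutral_left assms) (auto simp: in_keys_iff)
  finally show ?thesis .
qed

lemma bilin_ext_add_left: "bilin_ext c (a + a') b = bilin_ext c a b + bilin_ext c a' b"
proof -
  let ?S = "Poly_Mapping.keys a \<union> Poly_Mapping.keys a'" and ?T = "Poly_Mapping.keys b"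
  have keys: "Poly_Mapping.keys (a + a') \<subseteq> ?S"
    by (rule keys_add)
  show ?thesis
    using keys by (simp add: bilin_ext_eq_sum_superset[where S = ?S and T = ?T]
        lookup_add distrib_right single_add sum.distrib)
qed

lemma bilin_ext_add_right: "bilin_ext c a (b + b') = bilin_ext c a b + bilin_ext c a b'"
proof -
  let ?S = "Poly_Mapping.keys a" and ?T = "Poly_Mapping.keys b \<union> Poly_Mapping.keys b'"
  have keys: "Poly_Mapping.keys (b + b') \<subseteq> ?T"
    by (rule keys_add)
  show ?thesis
    using keys by (simp add: bilin_ext_eq_sum_superset[where S = ?S and T = ?T]
        lookup_add distrib_left distrib_right single_add sum.distrib)
qed

lemma bilin_ext_single:
  "bilin_ext c (Poly_Mapping.single m r) (Poly_Mapping.single n s)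
     = Poly_Mapping.single (m + n) (r * s * c m n)"
  by (auto simp: bilin_ext_def)

lemma left_symmetric_bilin_ext:
  assumes "\<And>m n q. c m n * c (m + n) q - c n q * c m (n + q)
                  = c n m * c (n + m) q - c m q * c n (m + q)"
  shows "left_symmetric (bilin_ext c)"
proof -
  let ?p = "bilin_ext c"
  define D where "D x y z = ?p (?p x y) z - ?p x (?p y z) - (?p (?p y x) z - ?p y (?p x z))"
    for x y z
  have D_add: "D (x + x') y z = D x y z + D x' y z" "D x (y + y') z = D x y z + D x y' z"
    "D x y (z + z') = D x y z + D x y z'" for x x' y y' z z'
    by (simp_all add: D_def bilin_ext_add_left bilin_ext_add_right algebra_simps)
  have D_single: "D (Poly_Mapping.single m r) (Poly_Mapping.single n s) (Poly_Mapping.single q t) = 0"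
    for m n q r s t
  proof -
    have idx: "n + m = m + n" "m + (n + q) = m + n + q" "n + (m + q) = m + n + q"
      by simp_all
    have "D (Poly_Mapping.single m r) (Poly_Mapping.single n s) (Poly_Mapping.single q t)
        = Poly_Mapping.single (m + n + q)
            (r * s * c m n * t * c (m + n) q - r * (s * t * c n q) * c m (n + q)
             - (s * r * c n m * t * c (m + n) q - s * (r * t * c m q) * c n (m + q)))"
      by (simp only: D_def bilin_ext_single idx single_diff)
    also have "r * s * c m n * t * c (m + n) q - r * (s * t * c n q) * c m (n + q)
             - (s * r * c n m * t * c (m + n) q - s * (r * t * c m q) * c n (m + q))
        = r * s * t * ((c m n * c (m + n) q - c n q * c m (n + q))
                       - (c n m * c (m + n) q - c m q * c n (m + q)))"
      by (simp add: algebra_simps)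
    also have "\<dots> = 0"
      using assms[of m n q] unfolding idx by simp
    finally show ?thesis
      by simp
  qed
  have D_single_single: "D (Poly_Mapping.single m r) (Poly_Mapping.single n s) z = 0" for m n r s z
    by (rule poly_mapping_additive_eq_0[of "D (Poly_Mapping.single m r) (Poly_Mapping.single n s)"])
      (simp_all add: D_add D_single)
  have D_single_left: "D (Poly_Mapping.single m r) y z = 0" for m r y z
    by (rule poly_mapping_additive_eq_0[of "\<lambda>y. D (Poly_Mapping.single m r) y z"])
      (simp_all add: D_add D_single_single)
  have "D x y z = 0" for x y z
    by (rule poly_mapping_additive_eq_0[of "\<lambda>x. D x y z"]) (simp_all add: D_add D_single_left)
  then show ?thesis by (simp add: left_symmetric_def D_def)
qed

lemma bilin_ext_commutator:
  assumes "\<And>m n. c m n - c n m = d m n"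
  shows "bilin_ext c a b - bilin_ext c b a = bilin_ext d a b"
proof -
  define E where "E a b = bilin_ext c a b - bilin_ext c b a - bilin_ext d a b" for a b
  have E_single: "E (Poly_Mapping.single m r) (Poly_Mapping.single n s) = 0" for m n r s
  proof -
    have "E (Poly_Mapping.single m r) (Poly_Mapping.single n s)
        = Poly_Mapping.single (m + n) (r * s * c m n - s * r * c n m - r * s * d m n)"
      by (simp only: E_def bilin_ext_single add.commute[of n m] single_diff)
    also have "r * s * c m n - s * r * c n m - r * s * d m n = r * s * (c m n - c n m - d m n)"
      by (simp add: algebra_simps)
    finally show ?thesis
      using assms by simp
  qed
  have E_add: "E (a + a') b = E a b + E a' b" "E a (b + b') = E a b + E a b'" for a a' b b'
    by (simp_all add: E_def bilin_ext_add_left bilin_ext_add_right algebra_simps)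
  have E_single_left: "E (Poly_Mapping.single m r) b = 0" for m r b
    by (rule poly_mapping_additive_eq_0[of "E (Poly_Mapping.single m r)"])
      (simp_all add: E_add E_single)
  have "E a b = 0"
    by (rule poly_mapping_additive_eq_0[of "\<lambda>a. E a b"]) (simp_all add: E_add E_single_left)
  then show ?thesis by (simp add: E_def)
qed

definition V_correction :: "complex \<Rightarrow> int \<Rightarrow> int \<Rightarrow> int \<Rightarrow> complex" where
  "V_correction l k m n = (if m + n + k = 0 then of_int (m * n) / l else 0)"

lemma V_coeff_eq_V_correction:
  assumes "\<beta> \<noteq> of_int k"
  shows "V_coeff \<beta> k m n = of_int (n + k) + V_correction (\<beta> - of_int k) k m n"
proof (cases "m + n + k = 0")
  case True
  then have m: "m = - n - k" by simp
  from assms show ?thesis unfolding V_coeff_def V_correction_def m by (simp add: field_simps)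
qed (simp add: V_coeff_def V_correction_def)

lemma V_correction_commute: "V_correction l k m n = V_correction l k n m"
  by (simp add: V_correction_def add.commute mult.commute)

lemma V_correction_mult_index_sum: "V_correction l k m n * of_int (m + n + k) = 0"
  by (cases "m + n + k = 0") (simp_all add: V_correction_def)

lemma V_correction_mult_V_correction_left: "V_correction l k m n * V_correction l k (m + n) q = 0"
  by (simp add: V_correction_def)

lemma V_correction_mult_V_correction_right: "V_correction l k n q * V_correction l k m (n + q) = 0"
  by (simp add: V_correction_def)

lemma V_correction_assoc:
  "of_int (n + k) * V_correction l k (m + n) q - of_int (q + k) * V_correction l k m (n + q)
     = (if m + n + q + k = 0 then of_int ((m + n) * (m * n - q\<^sup>2)) / l else 0)"
proof (cases "m + n + q + k = 0")
  case True
  then have k: "k = - m - n - q" by simp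
  show ?thesis unfolding V_correction_def k by (simp add: divide_inverse algebra_simps power2_eq_square)
qed (simp add: V_correction_def algebra_simps)

lemma V_coeff_associator:
  assumes "\<beta> \<noteq> of_int k"
  defines "d \<equiv> V_correction (\<beta> - of_int k) k"
  shows "V_coeff \<beta> k m n * V_coeff \<beta> k (m + n) q - V_coeff \<beta> k n q * V_coeff \<beta> k m (n + q)
       = of_int (q + k) * (d m n - of_int q)
         + (if m + n + q + k = 0 then of_int ((m + n) * (m * n - q\<^sup>2)) / (\<beta> - of_int k) else 0)"
proof -
  have split: "V_coeff \<beta> k i j = of_int (j + k) + d i j" for i j
    unfolding d_def by (rule V_coeff_eq_V_correction[OF assms(1)])
  have "V_coeff \<beta> k m n * V_coeff \<beta> k (m + n) q
      = of_int (n + k) * of_int (q + k) + of_int (n + k) * d (m + n) q + d m n * of_int (q + k)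
        + d m n * d (m + n) q"
    by (simp add: split algebra_simps)
  also have "d m n * d (m + n) q = 0"
    unfolding d_def by (rule V_correction_mult_V_correction_left)
  finally have left: "V_coeff \<beta> k m n * V_coeff \<beta> k (m + n) q
      = of_int (n + k) * of_int (q + k) + of_int (n + k) * d (m + n) q + d m n * of_int (q + k)"
    by simp
  have "V_coeff \<beta> k n q * V_coeff \<beta> k m (n + q)
      = of_int (q + k) * of_int (n + q + k) + of_int (q + k) * d m (n + q)
        + d n q * of_int (n + q + k) + d n q * d m (n + q)"
    by (simp add: split algebra_simps)
  also have "d n q * of_int (n + q + k) = 0"
    unfolding d_def by (rule V_correction_mult_index_sum)
  also have "d n q * d m (n + q) = 0"
    unfolding d_def by (rule V_correction_mult_V_correction_right)
  finally have right: "V_coeff \<beta> k n q * V_coeff \<beta> k m (n + q)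
      = of_int (q + k) * of_int (n + q + k) + of_int (q + k) * d m (n + q)"
    by simp
  have assoc: "of_int (n + k) * d (m + n) q - of_int (q + k) * d m (n + q)
      = (if m + n + q + k = 0 then of_int ((m + n) * (m * n - q\<^sup>2)) / (\<beta> - of_int k) else 0)"
    unfolding d_def by (rule V_correction_assoc)
  show ?thesis
    unfolding left right assoc[symmetric] by (simp add: algebra_simps)
qed

lemma V_coeff_left_symmetric:
  assumes "\<beta> \<noteq> of_int k"
  shows "V_coeff \<beta> k m n * V_coeff \<beta> k (m + n) q - V_coeff \<beta> k n q * V_coeff \<beta> k m (n + q)
       = V_coeff \<beta> k n m * V_coeff \<beta> k (n + m) q - V_coeff \<beta> k m q * V_coeff \<beta> k n (m + q)"
  unfolding V_coeff_associator[OF assms] by (simp add: V_correction_commute algebra_simps)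

lemma V_coeff_commute_diff:
  assumes "\<beta> \<noteq> of_int k"
  shows "V_coeff \<beta> k m n - V_coeff \<beta> k n m = of_int (n - m)"
  using V_correction_commute by (simp add: V_coeff_eq_V_correction[OF assms])

theorem theorem3p8:
  fixes \<beta> :: complex and k :: int
  assumes "\<beta> - of_int k \<noteq> 0"
  shows "left_symmetric (V_prod \<beta> k)
    \<and> (\<forall>a b. V_prod \<beta> k a b - V_prod \<beta> k b a = witt_bracket a b)"
proof -
  have \<beta>: "\<beta> \<noteq> of_int k"
    using assms by simp
  show ?thesis
    unfolding V_prod_def witt_bracket_def
    using left_symmetric_bilin_ext[of "V_coeff \<beta> k", OF V_coeff_left_symmetric[OF \<beta>]]
      bilin_ext_commutator[of "V_coeff \<beta> k" "\<lambda>m n. of_int (n - m)", OF V_coeff_commute_diff[OF \<beta>]]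
    by blast
qed

end
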